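(* Let $\beta_1,\dots,\beta_T\in(0,1)$ be a variance schedule, $\alpha_t:=1-\beta_t$, $\bar\alpha_t:=\prod_{s=1}^t\alpha_s$, and $S(z_0,\varepsilon,t):=\sqrt{\bar\alpha_t}\,z_0+\sqrt{1-\bar\alpha_t}\,\varepsilon$. Let $\varepsilon_\theta(z_t,c_{\mathrm{text}},c_{\mathrm{img}})$ be a conditional noise-prediction network with generation function $G(z_t,c_{\mathrm{text}},c_{\mathrm{img}}):=[z_t-\sqrt{1-\bar\alpha_t}\,\varepsilon_\theta(z_t,c_{\mathrm{text}},c_{\mathrm{img}})]/\sqrt{\bar\alpha_t}$, and let $\varepsilon^*_\theta(z_t,c_{\mathrm{text}})$ be the noise-prediction network of a fixed pre-trained text-guided latent diffusion model. Let $P(z_0,c_{\mathrm{text}})$ be a likelihood function that image $z_0$ lies in the data distribution specified by text condition $c_{\mathrm{text}}$, and assume (domain smoothness) that for every text condition $P(\cdot,c_{\mathrm{text}})$ is $L$-Lipschitz for some $L<\infty$: $|P(z^1_0,c_{\mathrm{text}})-P(z^2_0,c_{\mathrm{text}})|\le L\|z^1_0-z^2_0\|_2$. Let $c_y$ be the target text condition, $x_0$ a source image, $\varepsilon_x\sim\mathcal N(0,\mathbf I)$, and $x_t=S(x_0,\varepsilon_x,t)$. Define $$\mathcal L_{\mathrm{LDM}}=-\mathbb E_{x_0,\varepsilon_x}\,P\big[G(S(x_0,\varepsilon_x,t),c_y,x_0),c_y\big].$$ Then $$\mathcal L_{\mathrm{LDM}}\le \mathcal L_{\mathrm{self}}:=\mathbb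 E_{x_0,\varepsilon_x}\Big[L\sqrt{\tfrac{1-\bar\alpha_t}{\bar\alpha_t}}\,\big\|\varepsilon_\theta(x_t,c_y,x_0)-\varepsilon^*_\theta(x_t,c_y)\big\|_2\Big]+\mathrm{const},$$ where $\mathrm{const}$ is a quantity not depending on the network $\varepsilon_\theta$ (it depends only on the pre-trained model and $P$).
   Context: Setting: latent diffusion models for unpaired image-to-image translation from a source domain $\mathcal X$ to a target domain $\mathcal Y$ specified by the text condition $c_y$; the time-step dependence of the networks is suppressed in notation. *)

theory Defs
  imports "HOL-Probability.Probability"
begin

definition alpha_bar :: "(nat \<Rightarrow> real) \<Rightarrow> nat \<Rightarrow> real" where
  "alpha_bar \<beta> t = (\<Prod>s = 1..t. 1 - \<beta> s)"

definition fwd :: "(nat \<Rightarrow> real) \<Rightarrow> 'a::real_vector \<Rightarrow> 'a \<Rightarrow> nat \<Rightarrow> 'a" where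
  "fwd \<beta> z0 e t = sqrt (alpha_bar \<beta> t) *\<^sub>R z0 + sqrt (1 - alpha_bar \<beta> t) *\<^sub>R e"

definition gen :: "(nat \<Rightarrow> real) \<Rightarrow> nat \<Rightarrow> 'a::real_vector \<Rightarrow> 'a \<Rightarrow> 'a" where
  "gen \<beta> t zt epred = (1 / sqrt (alpha_bar \<beta> t)) *\<^sub>R (zt - sqrt (1 - alpha_bar \<beta> t) *\<^sub>R epred)"

definition std_gaussian :: "'a::euclidean_space measure" where
  "std_gaussian = density lborel
     (\<lambda>x. ennreal (exp (- (norm x)\<^sup>2 / 2) / (2 * pi) powr (real DIM('a) / 2)))"

end

theory Submission
  imports Defs
begin

text \<open>The clean estimate G is affine in the predicted noise with slope
  sqrt((1 - alpha_bar)/alpha_bar), so the Lipschitz bound on P turns the likelihood gap between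
  the trained and the pre-trained network into L sqrt((1 - alpha_bar)/alpha_bar) times the
  distance of their noise predictions, pointwise. Integrating, the negated expected likelihood of
  the trained network is bounded by the expected distance plus the negated expected likelihood
  of the pre-trained network, which is the constant.\<close>

lemma alpha_bar_pos:
  assumes "\<And>s. s \<in> {1..t} \<Longrightarrow> \<beta> s < 1"
  shows "0 < alpha_bar \<beta> t"
  unfolding alpha_bar_def using assms by (intro prod_pos) simp

lemma alpha_bar_le_one:
  assumes "\<And>s. s \<in> {1..t} \<Longrightarrow> 0 \<le> \<beta> s \<and> \<beta> s \<le> 1"
  shows "alpha_bar \<beta> t \<le> 1"
  unfolding alpha_bar_def using assms by (intro prod_le_1) auto

lemma norm_gen_diff:
  assumes "0 \<le> alpha_bar \<beta> t" "alpha_bar \<beta> t \<le> 1"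
  shows "norm (gen \<beta> t z w - gen \<beta> t z w')
    = sqrt ((1 - alpha_bar \<beta> t) / alpha_bar \<beta> t) * norm (w - w')"
proof -
  let ?a = "alpha_bar \<beta> t"
  have "gen \<beta> t z w - gen \<beta> t z w' = (sqrt (1 - ?a) / sqrt ?a) *\<^sub>R (w' - w)"
    by (simp add: gen_def algebra_simps scaleR_diff_right)
  then show ?thesis
    using assms by (simp add: real_sqrt_divide norm_minus_commute)
qed

lemma lipschitz_gen_noise:
  assumes lip: "\<And>z1 z2. \<bar>Q z1 - Q z2\<bar> \<le> L * norm (z1 - z2)"
    and "0 \<le> alpha_bar \<beta> t" "alpha_bar \<beta> t \<le> 1"
  shows "Q (gen \<beta> t z w') - Q (gen \<beta> t z w)
    \<le> L * sqrt ((1 - alpha_bar \<beta> t) / alpha_bar \<beta> t) * norm (w - w')"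
  using lip[of "gen \<beta> t z w'" "gen \<beta> t z w"] norm_gen_diff[OF assms(2,3), of z w w']
  by (simp add: norm_minus_commute)

lemma integral_le_integral_add:
  fixes f g h :: "'a \<Rightarrow> real"
  assumes "integrable M f" "integrable M g" "integrable M h"
    and "\<And>x. f x \<le> g x + h x"
  shows "integral\<^sup>L M f \<le> integral\<^sup>L M g + integral\<^sup>L M h"
proof -
  have "integral\<^sup>L M f \<le> (\<integral>x. g x + h x \<partial>M)"
    using assms by (intro integral_mono) auto
  also have "\<dots> = integral\<^sup>L M g + integral\<^sup>L M h"
    using assms(2,3) by (rule Bochner_Integration.integral_add)
  finally show ?thesis .
qed

theorem proposition2:
  fixes \<beta> :: "nat \<Rightarrow> real" and T t :: nat and L :: real
    and P :: "'a::euclidean_space \<Rightarrow> 'c \<Rightarrow> real"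
    and eps_star :: "'a \<Rightarrow> 'c \<Rightarrow> 'a"
    and c_y :: 'c and D :: "'a measure"
  assumes beta: "\<And>s. s \<in> {1..T} \<Longrightarrow> 0 < \<beta> s \<and> \<beta> s < 1"
    and t: "t \<in> {1..T}"
    and lip: "\<And>c z1 z2. \<bar>P z1 c - P z2 c\<bar> \<le> L * norm (z1 - z2)"
    and D: "prob_space D" "sets D = sets borel"
    and int_star: "integrable (D \<Otimes>\<^sub>M std_gaussian)
        (\<lambda>(x0, e). P (gen \<beta> t (fwd \<beta> x0 e t) (eps_star (fwd \<beta> x0 e t) c_y)) c_y)"
  shows "\<exists>const::real. \<forall>eps_theta :: 'a \<Rightarrow> 'c \<Rightarrow> 'a \<Rightarrow> 'a.
    integrable (D \<Otimes>\<^sub>M std_gaussian)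
        (\<lambda>(x0, e). P (gen \<beta> t (fwd \<beta> x0 e t) (eps_theta (fwd \<beta> x0 e t) c_y x0)) c_y)
    \<longrightarrow> integrable (D \<Otimes>\<^sub>M std_gaussian)
        (\<lambda>(x0, e). L * sqrt ((1 - alpha_bar \<beta> t) / alpha_bar \<beta> t)
            * norm (eps_theta (fwd \<beta> x0 e t) c_y x0 - eps_star (fwd \<beta> x0 e t) c_y))
    \<longrightarrow> - (\<integral>(x0, e). P (gen \<beta> t (fwd \<beta> x0 e t) (eps_theta (fwd \<beta> x0 e t) c_y x0)) c_y
              \<partial>(D \<Otimes>\<^sub>M std_gaussian))
        \<le> (\<integral>(x0, e). L * sqrt ((1 - alpha_bar \<beta> t) / alpha_bar \<beta> t)
              * norm (eps_theta (fwd \<beta> x0 e t) c_y x0 - eps_star (fwd \<beta> x0 e t) c_y)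
              \<partial>(D \<Otimes>\<^sub>M std_gaussian)) + const"
proof -
  let ?M = "D \<Otimes>\<^sub>M std_gaussian"
  let ?star = "\<lambda>(x0, e). P (gen \<beta> t (fwd \<beta> x0 e t) (eps_star (fwd \<beta> x0 e t) c_y)) c_y"
  have beta_t: "s \<in> {1..t} \<Longrightarrow> 0 < \<beta> s \<and> \<beta> s < 1" for s
    using beta t by auto
  have a0: "0 \<le> alpha_bar \<beta> t"
    using alpha_bar_pos[of t \<beta>] beta_t by fastforce
  have a1: "alpha_bar \<beta> t \<le> 1"
    using alpha_bar_le_one[of t \<beta>] beta_t by fastforce
  show ?thesis
  proof (intro exI[of _ "- integral\<^sup>L ?M ?star"] allI impI)
    fix eps_theta :: "'a \<Rightarrow> 'c \<Rightarrow> 'a \<Rightarrow> 'a"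
    let ?theta = "\<lambda>(x0, e). P (gen \<beta> t (fwd \<beta> x0 e t) (eps_theta (fwd \<beta> x0 e t) c_y x0)) c_y"
    let ?dist = "\<lambda>(x0, e). L * sqrt ((1 - alpha_bar \<beta> t) / alpha_bar \<beta> t)
            * norm (eps_theta (fwd \<beta> x0 e t) c_y x0 - eps_star (fwd \<beta> x0 e t) c_y)"
    assume "integrable ?M ?theta" "integrable ?M ?dist"
    moreover have "- ?theta (x0, e) \<le> ?dist (x0, e) + - ?star (x0, e)" for x0 e
      using lipschitz_gen_noise[where Q = "\<lambda>z. P z c_y", OF lip a0 a1,
          of "fwd \<beta> x0 e t" "eps_star (fwd \<beta> x0 e t) c_y" "eps_theta (fwd \<beta> x0 e t) c_y x0"]
      by simp
    ultimately have "integral\<^sup>L ?M (\<lambda>p. - ?theta p)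
        \<le> integral\<^sup>L ?M ?dist + integral\<^sup>L ?M (\<lambda>p. - ?star p)"
      using int_star by (intro integral_le_integral_add) (auto simp: split_paired_all)
    then show "- integral\<^sup>L ?M ?theta \<le> integral\<^sup>L ?M ?dist + - integral\<^sup>L ?M ?star"
      by simp
  qed
qed

end
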